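(* With the notation of the context, the constrained Hamiltonian vector field satisfies, at every point of $\mathcal M\times\mathbb R$, $$T\gamma\big({X_H}|_{\mathcal M\times\mathbb R}\big)=X_{H,\mathcal M}=T\gamma\big({X_{H\circ\gamma}}|_{\mathcal M\times\mathbb R}\big).$$
   Context: Let $Q$ be a smooth $n$-manifold and $\pi:T^*Q\times\mathbb R\to Q$ the projection. On $T^*Q\times\mathbb R$ with canonical coordinates $(q^i,p_i,z)$ consider the contact form $\eta=dz-p_i\,dq^i$ with Reeb vector field $\mathcal R=\partial/\partial z$, the isomorphism $\flat:T(T^*Q\times\mathbb R)\to T^*(T^*Q\times\mathbb R)$, $\flat(v)=i_v\,d\eta+\eta(v)\eta$, and $\sharp=\flat^{-1}$. For a function $F$, the contact Hamiltonian vector field $X_F$ is defined by $\flat(X_F)=dF-(\mathcal R(F)+F)\eta$. Let $g$ be a Riemannian metric on $Q$ (inverse $g^{ij}$), $\flat_g:TQ\to T^*Q$ its musical isomorphism, $V\in C^\infty(Q\times\mathbb R)$, $H(q,p,z)=\tfrac12 g^{ij}(q)p_ip_j+V(q,z)$. Let $\mathcal D\subseteq TQ$ be a constant-rank distribution, $\mathcal D^\circ$ its annihilator (locally spanned by 1-forms $\Phi^a_i\,dq^i$), $\mathcal M=\flat_g(\mathcal D)$, so $T^*Q=\mathcal M\oplus\mathcal D^\circ$ fiberwise. Let $\gamma:T^*Q\times\mathbb R\to\mathcal M\times\mathbb R$, $\gamma(\alpha_q,z)=(P_q\alpha_q,z)$ with $P_q$ the projection of $T^*_qQ$ onto $\mathcal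 M_q$ along $\mathcal D^\circ_q$. The constrained Hamiltonian vector field $X_{H,\mathcal M}$ is the (unique) vector field on $\mathcal M\times\mathbb R$, tangent to $\mathcal M\times\mathbb R$, such that at every point of $\mathcal M\times\mathbb R$ $$\flat(X_{H,\mathcal M})-dH+(H+\mathcal R(H))\eta\in\pi^*(\mathcal D^\circ);$$ in coordinates its integral curves satisfy $\dot q^i=\partial H/\partial p_i$, $\dot p_i=-\partial H/\partial q^i-p_i\,\partial H/\partial z-\lambda_a\Phi^a_i$, $\dot z=p_i\,\partial H/\partial p_i-H$, with the curve staying in $\mathcal M\times\mathbb R$. *)

theory Defs
  imports "HOL-Analysis.Analysis"
begin

(* Local coordinates: Q is an open set U of real^('n::finite) (a chart).
   A point of T*Q x R is (q, p, z); tangent vectors are triples (dq, dp, dz)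
   in the same coordinates; 1-forms are real-valued linear functionals on them. *)
type_synonym 'n pt = "(real^'n) \<times> (real^'n) \<times> real"

fun dd :: "('a::real_normed_vector \<Rightarrow> 'b::real_normed_vector) \<Rightarrow> 'a list \<Rightarrow> 'a \<Rightarrow> 'b" where
  "dd f [] = f"
| "dd f (v # vs) = (\<lambda>x. frechet_derivative (dd f vs) (at x) v)"

definition smooth_on :: "'a::real_normed_vector set \<Rightarrow> ('a \<Rightarrow> 'b::real_normed_vector) \<Rightarrow> bool" where
  "smooth_on S f \<longleftrightarrow> (\<forall>vs. \<forall>x\<in>S. dd f vs differentiable (at x))"

(* contact form eta = dz - p_i dq^i at the point x, applied to v *)
definition eta :: "('n::finite) pt \<Rightarrow> ('n::finite) pt \<Rightarrow> real" where
  "eta x v = snd (snd v) - fst (snd x) \<bullet> fst v"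

definition deta :: "('n::finite) pt \<Rightarrow> ('n::finite) pt \<Rightarrow> real" where
  "deta v w = fst v \<bullet> fst (snd w) - fst (snd v) \<bullet> fst w"

definition cflat :: "('n::finite) pt \<Rightarrow> ('n::finite) pt \<Rightarrow> ('n::finite) pt \<Rightarrow> real" where
  "cflat x v = (\<lambda>w. deta v w + eta x v * eta x w)"

definition reeb :: "('n::finite) pt" where
  "reeb = (0, 0, 1)"

definition XH :: "(('n::finite) pt \<Rightarrow> real) \<Rightarrow> ('n::finite) pt \<Rightarrow> ('n::finite) pt" where
  "XH F x = (THE v. cflat x v =
      (\<lambda>w. frechet_derivative F (at x) w
            - (frechet_derivative F (at x) reeb + F x) * eta x w))"

(* the distribution D, given by its annihilating 1-forms Phi^a, a < m *)
definition Dist :: "(nat \<Rightarrow> real^('n::finite) \<Rightarrow> real^('n::finite)) \<Rightarrow> nat \<Rightarrow> real^('n::finite) \<Rightarrow> (real^('n::finite)) set" where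
  "Dist \<Phi> m q = {v. \<forall>a<m. \<Phi> a q \<bullet> v = 0}"

definition Dann :: "(real^('n::finite) \<Rightarrow> (real^('n::finite)) set) \<Rightarrow> real^('n::finite) \<Rightarrow> (real^('n::finite)) set" where
  "Dann D q = {\<alpha>. \<forall>u\<in>D q. \<alpha> \<bullet> u = 0}"

definition Mfib :: "(real^('n::finite) \<Rightarrow> real^('n::finite)^'n) \<Rightarrow> (real^('n::finite) \<Rightarrow> (real^('n::finite)) set) \<Rightarrow> real^('n::finite) \<Rightarrow> (real^('n::finite)) set" where
  "Mfib g D q = (\<lambda>v. g q *v v) ` D q"

definition Pproj :: "(real^('n::finite) \<Rightarrow> real^('n::finite)^'n) \<Rightarrow> (real^('n::finite) \<Rightarrow> (real^('n::finite)) set) \<Rightarrow> real^('n::finite) \<Rightarrow> real^('n::finite) \<Rightarrow> real^('n::finite)" where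
  "Pproj g D q \<alpha> = (THE \<beta>. \<beta> \<in> Mfib g D q \<and> \<alpha> - \<beta> \<in> Dann D q)"

definition gam :: "(real^('n::finite) \<Rightarrow> real^('n::finite)^'n) \<Rightarrow> (real^('n::finite) \<Rightarrow> (real^('n::finite)) set) \<Rightarrow> ('n::finite) pt \<Rightarrow> ('n::finite) pt" where
  "gam g D x = (fst x, Pproj g D (fst x) (fst (snd x)), snd (snd x))"

definition MR :: "(real^('n::finite)) set \<Rightarrow> (real^('n::finite) \<Rightarrow> real^('n::finite)^'n) \<Rightarrow> (real^('n::finite) \<Rightarrow> (real^('n::finite)) set) \<Rightarrow> (('n::finite) pt) set" where
  "MR U g D = {x. fst x \<in> U \<and> fst (snd x) \<in> Mfib g D (fst x)}"

definition tspace :: "('a::real_normed_vector) set \<Rightarrow> 'a \<Rightarrow> 'a set" where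
  "tspace S x = {v. \<exists>c e. e > 0 \<and> c 0 = x \<and> (\<forall>t. \<bar>t\<bar> < e \<longrightarrow> c t \<in> S)
                      \<and> (c has_vector_derivative v) (at 0)}"

definition XHM :: "(real^('n::finite)) set \<Rightarrow> (real^('n::finite) \<Rightarrow> real^('n::finite)^'n) \<Rightarrow> (real^('n::finite) \<Rightarrow> (real^('n::finite)) set)
                   \<Rightarrow> (('n::finite) pt \<Rightarrow> real) \<Rightarrow> ('n::finite) pt \<Rightarrow> ('n::finite) pt" where
  "XHM U g D H x = (THE v. v \<in> tspace (MR U g D) x \<and>
      (\<exists>\<alpha>\<in>Dann D (fst x).
         (\<lambda>w. cflat x v w - frechet_derivative H (at x) w
               + (H x + frechet_derivative H (at x) reeb) * eta x w)
       = (\<lambda>w. \<alpha> \<bullet> fst w)))"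

definition Ham :: "(real^('n::finite) \<Rightarrow> real^('n::finite)^'n) \<Rightarrow> (real^('n::finite) \<Rightarrow> real \<Rightarrow> real) \<Rightarrow> ('n::finite) pt \<Rightarrow> real" where
  "Ham g V x = (1/2) * (fst (snd x) \<bullet> (matrix_inv (g (fst x)) *v fst (snd x)))
               + V (fst x) (snd (snd x))"

end

theory Submission
  imports Defs
begin

(* Let T be the derivative of \<gamma> at a point x of M x R.  Since \<gamma> fixes q and z, is affine
   in the momentum with linear part the projection P_q onto M_q along D^o_q, and is idempotent,
   T differs from the identity by a momentum in D^o_q = ker P_q.  Hence flat (T X_H) differs
   from flat X_H by a form delta_i dq^i with delta in D^o, and T X_H, being the velocity of
   t |-> \<gamma> (x + t X_H), is tangent to M x R: it solves the defining condition of X_{H,M}.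
   At points of M the differential dH vanishes on momenta in D^o, so d(H o \<gamma>) = dH o T = dH
   and X_{H o \<gamma>} = X_H at x.
   Differentiability of \<gamma> comes from computing P_q by Gram-Schmidt for the inner product
   g^-1, whose entries are rational in those of g by Cramer's rule. *)

section \<open>Derivatives of vector- and matrix-valued maps\<close>

lemma smooth_on_imp_differentiable:
  "smooth_on S f \<Longrightarrow> x \<in> S \<Longrightarrow> f differentiable (at x)"
  unfolding smooth_on_def by (metis dd.simps(1))

lemma differentiable_vec_nth:
  fixes f :: "'a::real_normed_vector \<Rightarrow> 'b::real_normed_vector^'n"
  shows "f differentiable (at y) \<Longrightarrow> (\<lambda>x. f x $ i) differentiable (at y)"
  unfolding differentiable_def
  using bounded_linear.has_derivative[OF bounded_linear_vec_nth] by blast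

lemma differentiable_vec_lambda:
  fixes f :: "'a::real_normed_vector \<Rightarrow> 'b::euclidean_space^'n"
  assumes "\<And>i. (\<lambda>x. f x $ i) differentiable (at y)"
  shows "f differentiable (at y)"
proof -
  have "(\<lambda>x. f x $ i \<bullet> u) differentiable (at y)" for i u
    using assms[of i] by simp
  then show ?thesis
    unfolding differentiable_componentwise_within[of f]
    by (auto simp: Basis_vec_def inner_axis)
qed

lemma differentiable_prod:
  fixes f :: "'i \<Rightarrow> 'a::real_normed_vector \<Rightarrow> real"
  assumes "\<And>i. i \<in> I \<Longrightarrow> f i differentiable (at y)"
  shows "(\<lambda>x. \<Prod>i\<in>I. f i x) differentiable (at y)"
proof -
  from assms obtain f' where "\<And>i. i \<in> I \<Longrightarrow> (f i has_derivative f' i) (at y)"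
    unfolding differentiable_def by metis
  then show ?thesis
    unfolding differentiable_def using has_derivative_prod by blast
qed

lemma differentiable_det:
  fixes A :: "'a::real_normed_vector \<Rightarrow> real^'n^'n"
  assumes "\<And>i j. (\<lambda>x. A x $ i $ j) differentiable (at y)"
  shows "(\<lambda>x. det (A x)) differentiable (at y)"
  unfolding det_def
  by (intro differentiable_sum ballI differentiable_mult differentiable_const differentiable_prod assms)
     (simp add: finite_permutations)

lemma matrix_inv_cramer:
  fixes B :: "real^'n^'n"
  assumes "det B \<noteq> 0"
  shows "matrix_inv B = (\<chi> i j. det (\<chi> r s. if s = i then axis j 1 $ r else B $ r $ s) / det B)"
proof -
  have "invertible B" using assms invertible_det_nz by blast
  then have "B ** matrix_inv B = mat 1"
    unfolding invertible_def matrix_inv_def by (metis (mono_tags, lifting) someI_ex)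
  then have "B *v (matrix_inv B *v axis j 1) = axis j 1" for j
    by (simp add: matrix_vector_mul_assoc)
  then have "matrix_inv B *v axis j 1 = (\<chi> k. det (\<chi> r s. if s = k then axis j 1 $ r else B $ r $ s) / det B)" for j
    using cramer[OF assms] by blast
  then show ?thesis
    by (simp add: vec_eq_iff matrix_vector_mult_basis column_def)
qed

lemma differentiable_matrix_inv:
  fixes A :: "'a::real_normed_vector \<Rightarrow> real^'n^'n"
  assumes A: "A differentiable (at y)" and det: "det (A y) \<noteq> 0"
  shows "(\<lambda>x. matrix_inv (A x)) differentiable (at y)"
proof -
  have A_ij: "(\<lambda>x. A x $ i $ j) differentiable (at y)" for i j
    by (intro differentiable_vec_nth A)
  have det_diff: "(\<lambda>x. det (A x)) differentiable (at y)"
    by (intro differentiable_det A_ij)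
  define C where "C x = (\<chi> i j. det (\<chi> r s. if s = i then axis j 1 $ r else A x $ r $ s) / det (A x))" for x
  have "C differentiable (at y)"
    unfolding C_def
    apply (intro differentiable_vec_lambda, simp, intro differentiable_divide det_diff det differentiable_det)
    subgoal for i j r s by (cases "s = i") (simp_all add: A_ij)
    done
  then obtain C' where C': "(C has_derivative C') (at y)"
    unfolding differentiable_def by blast
  have "isCont (\<lambda>x. det (A x)) y"
    using det_diff differentiable_imp_continuous_within continuous_at by blast
  then have "\<forall>\<^sub>F x in at y. det (A x) \<noteq> 0"
    using det by (metis continuous_at tendsto_imp_eventually_ne)
  then have "\<forall>\<^sub>F x in at y. C x = matrix_inv (A x)"
    by eventually_elim (simp add: C_def matrix_inv_cramer)
  then have "((\<lambda>x. matrix_inv (A x)) has_derivative C') (at y)"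
    using has_derivative_transform_eventually[OF C'] det by (simp add: C_def matrix_inv_cramer)
  then show ?thesis unfolding differentiable_def by blast
qed

lemma has_derivative_linear_invariant:
  assumes f: "(f has_derivative f') (at x)" and L: "bounded_linear L"
    and inv: "\<And>y. L (f y) = L y"
  shows "L (f' u) = L u"
proof -
  have "((\<lambda>y. L (f y)) has_derivative (\<lambda>u. L (f' u))) (at x)"
    using bounded_linear.has_derivative[OF L f] .
  moreover have "((\<lambda>y. L (f y)) has_derivative L) (at x)"
    unfolding inv by (rule bounded_linear_imp_has_derivative[OF L])
  ultimately show ?thesis using has_derivative_unique by metis
qed

lemma has_derivative_along_line:
  assumes f: "(f has_derivative f') (at x)"
    and line: "((\<lambda>t. f (x + t *\<^sub>R d)) has_derivative (\<lambda>t. t *\<^sub>R e)) (at 0)"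
  shows "f' d = e"
proof -
  have "((\<lambda>t::real. x + t *\<^sub>R d) has_derivative (\<lambda>t. t *\<^sub>R d)) (at 0)"
    by (auto intro!: derivative_eq_intros)
  from has_derivative_compose[OF this, of f f'] f
  have "((\<lambda>t. f (x + t *\<^sub>R d)) has_derivative (\<lambda>t. f' (t *\<^sub>R d))) (at 0)"
    by simp
  with line have "(\<lambda>t. f' (t *\<^sub>R d)) = (\<lambda>t. t *\<^sub>R e)"
    using has_derivative_unique by blast
  then show ?thesis by (metis scaleR_one)
qed

section \<open>Gram--Schmidt projection for a matrix inner product\<close>

definition mat_inner :: "real^'n^'n \<Rightarrow> real^'n \<Rightarrow> real^'n \<Rightarrow> real" where
  "mat_inner K a b = a \<bullet> (K *v b)"

lemma mat_inner_diff_left: "mat_inner K (a - b) c = mat_inner K a c - mat_inner K b c"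
  by (simp add: mat_inner_def inner_diff_left)

lemma mat_inner_scaleR_left: "mat_inner K (r *\<^sub>R a) c = r * mat_inner K a c"
  by (simp add: mat_inner_def)

lemma mat_inner_add_right: "mat_inner K a (b + c) = mat_inner K a b + mat_inner K a c"
  by (simp add: mat_inner_def inner_add_right matrix_vector_right_distrib)

lemma mat_inner_scaleR_right: "mat_inner K a (r *\<^sub>R c) = r * mat_inner K a c"
  by (simp add: mat_inner_def matrix_vector_mult_scaleR)

lemma mat_inner_commute: "transpose K = K \<Longrightarrow> mat_inner K a b = mat_inner K b a"
  unfolding mat_inner_def by (metis dot_lmul_matrix inner_commute transpose_matrix_vector)

lemma mat_inner_span_eq_0:
  assumes "\<And>y. y \<in> S \<Longrightarrow> mat_inner K a y = 0" and "x \<in> span S"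
  shows "mat_inner K a x = 0"
  using assms(2)
proof (induction rule: span_induct_alt)
  case base
  then show ?case by (simp add: mat_inner_def)
next
  case (step c y z)
  then show ?case using assms(1)[of y] by (simp add: mat_inner_add_right mat_inner_scaleR_right)
qed

lemma differentiable_mat_inner:
  fixes K :: "'a::real_normed_vector \<Rightarrow> real^'n^'n"
  assumes "K differentiable (at y)" "a differentiable (at y)" "b differentiable (at y)"
  shows "(\<lambda>x. mat_inner (K x) (a x) (b x)) differentiable (at y)"
proof -
  have "(\<lambda>x. K x $ i $ j) differentiable (at y)" "(\<lambda>x. b x $ j) differentiable (at y)" for i j
    by (intro differentiable_vec_nth assms)+
  then have "(\<lambda>x. K x *v b x) differentiable (at y)"
    unfolding matrix_vector_mult_def
    by (intro differentiable_vec_lambda) simp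
  then show ?thesis
    unfolding mat_inner_def using assms(2) by simp
qed

text \<open>\<^term>\<open>gs_proj K F k a\<close> is the \<^term>\<open>mat_inner K\<close>-orthogonal projection of
  \<^term>\<open>a\<close> onto the span of \<^term>\<open>F ` {..<k}\<close>, as long as no Gram--Schmidt residual
  degenerates.\<close>

fun gs_proj :: "real^'n^'n \<Rightarrow> (nat \<Rightarrow> real^'n) \<Rightarrow> nat \<Rightarrow> real^'n \<Rightarrow> real^'n" where
  "gs_proj K F 0 a = 0"
| "gs_proj K F (Suc k) a = gs_proj K F k a
     + (mat_inner K a (F k - gs_proj K F k (F k))
         / mat_inner K (F k - gs_proj K F k (F k)) (F k - gs_proj K F k (F k)))
       *\<^sub>R (F k - gs_proj K F k (F k))"

abbreviation gs_residual :: "real^'n^'n \<Rightarrow> (nat \<Rightarrow> real^'n) \<Rightarrow> nat \<Rightarrow> real^'n" where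
  "gs_residual K F k \<equiv> F k - gs_proj K F k (F k)"

lemma gs_proj_in_span: "gs_proj K F k a \<in> span (F ` {..<k})"
proof (induction k arbitrary: a)
  case 0
  then show ?case by (simp add: span_zero)
next
  case (Suc k)
  have sub: "span (F ` {..<k}) \<subseteq> span (F ` {..<Suc k})"
    by (intro span_mono) auto
  have "F k \<in> span (F ` {..<Suc k})"
    by (intro span_base) auto
  then have "gs_residual K F k \<in> span (F ` {..<Suc k})"
    using Suc.IH sub by (blast intro: span_diff)
  then show ?case
    using Suc.IH sub by (auto intro: span_add span_scale)
qed

lemma gs_residual_nonzero:
  "F k \<notin> span (F ` {..<k}) \<Longrightarrow> gs_residual K F k \<noteq> 0"
  using gs_proj_in_span[of K F k "F k"] by auto

lemma gs_proj_orthogonal: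
  assumes sym: "transpose K = K"
    and nondeg: "\<And>j. j < k \<Longrightarrow> mat_inner K (gs_residual K F j) (gs_residual K F j) \<noteq> 0"
    and "j < k"
  shows "mat_inner K (a - gs_proj K F k a) (F j) = 0"
  using nondeg \<open>j < k\<close>
proof (induction k arbitrary: a j)
  case 0
  then show ?case by simp
next
  case (Suc k)
  let ?f = "gs_residual K F k"
  let ?c = "mat_inner K a ?f / mat_inner K ?f ?f"
  define b where "b = a - gs_proj K F k a - ?c *\<^sub>R ?f"
  have f_orth: "mat_inner K ?f (F i) = 0" if "i < k" for i
    using Suc that by simp
  have b_orth: "mat_inner K b (F i) = 0" if "i < k" for i
    using Suc.IH[of i a] Suc.prems(1) f_orth[OF that] that
    by (simp add: b_def mat_inner_diff_left mat_inner_scaleR_left)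
  have "mat_inner K ?f (gs_proj K F k a) = 0"
    using mat_inner_span_eq_0[OF _ gs_proj_in_span] f_orth by blast
  then have "mat_inner K b ?f = 0"
    using Suc.prems(1)[of k] mat_inner_commute[OF sym, of ?f "gs_proj K F k a"]
    by (simp add: b_def mat_inner_diff_left mat_inner_scaleR_left)
  moreover have "mat_inner K b (gs_proj K F k (F k)) = 0"
    using mat_inner_span_eq_0[OF _ gs_proj_in_span] b_orth by blast
  ultimately have "mat_inner K b (F k) = 0"
    using mat_inner_add_right[of K b ?f "gs_proj K F k (F k)"] by simp
  moreover have "a - gs_proj K F (Suc k) a = b"
    by (simp add: b_def)
  ultimately show ?case
    using b_orth Suc.prems(2) less_Suc_eq by auto
qed

lemma differentiable_gs_proj:
  fixes K :: "'a::real_normed_vector \<Rightarrow> real^'n^'n"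
  assumes K: "K differentiable (at y)"
    and F: "\<And>j. j < k \<Longrightarrow> F j differentiable (at y)"
    and nondeg: "\<And>j. j < k \<Longrightarrow>
      mat_inner (K y) (gs_residual (K y) (\<lambda>i. F i y) j) (gs_residual (K y) (\<lambda>i. F i y) j) \<noteq> 0"
    and a: "a differentiable (at y)"
  shows "(\<lambda>x. gs_proj (K x) (\<lambda>i. F i x) k (a x)) differentiable (at y)"
  using F nondeg a
proof (induction k arbitrary: a)
  case 0
  then show ?case by simp
next
  case (Suc k)
  have "(\<lambda>x. gs_proj (K x) (\<lambda>i. F i x) k (F k x)) differentiable (at y)"
    using Suc by simp
  then have res: "(\<lambda>x. gs_residual (K x) (\<lambda>i. F i x) k) differentiable (at y)"
    using Suc.prems(1) by simp
  have "(\<lambda>x. gs_proj (K x) (\<lambda>i. F i x) k (a x)) differentiable (at y)"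
    using Suc by simp
  with res show ?case
    using Suc.prems(2)[of k]
    by (simp add: differentiable_mat_inner K Suc.prems(3))
qed

section \<open>The splitting \<open>T\<^sup>*Q = M \<oplus> D\<^sup>o\<close>\<close>

definition pos_def :: "real^'n^'n \<Rightarrow> bool" where
  "pos_def K \<longleftrightarrow> (\<forall>v. v \<noteq> 0 \<longrightarrow> v \<bullet> (K *v v) > 0)"

lemma pos_def_matrix_inv:
  fixes G :: "real^'n^'n"
  assumes "pos_def G"
  shows "det G \<noteq> 0" and "G ** matrix_inv G = mat 1" and "matrix_inv G ** G = mat 1"
proof -
  have "inj ((*v) G)"
  proof (rule injI)
    fix u v assume "G *v u = G *v v"
    then have "G *v (u - v) = 0" by (simp add: matrix_vector_mult_diff_distrib)
    then show "u = v" using assms unfolding pos_def_def by (metis inner_zero_right less_irrefl right_minus_eq)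
  qed
  then show "det G \<noteq> 0"
    using det_nz_iff_inj[of "(*v) G"] by simp
  then have "invertible G" using invertible_det_nz by blast
  then show "G ** matrix_inv G = mat 1" "matrix_inv G ** G = mat 1"
    unfolding invertible_def matrix_inv_def by (metis (mono_tags, lifting) someI_ex)+
qed

lemma pos_def_inverse:
  fixes G :: "real^'n^'n"
  assumes "pos_def G"
  shows "pos_def (matrix_inv G)"
  unfolding pos_def_def
proof (intro allI impI)
  fix v :: "real^'n" assume "v \<noteq> 0"
  let ?u = "matrix_inv G *v v"
  have Gu: "G *v ?u = v" using pos_def_matrix_inv[OF assms] by (simp add: matrix_vector_mul_assoc)
  with \<open>v \<noteq> 0\<close> have "?u \<noteq> 0" by auto
  with assms have "?u \<bullet> (G *v ?u) > 0" unfolding pos_def_def by blast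
  with Gu show "v \<bullet> (matrix_inv G *v v) > 0" by (simp add: inner_commute)
qed

lemma symmetric_matrix_inv:
  assumes "pos_def G" and sym: "transpose G = G"
  shows "transpose (matrix_inv G) = matrix_inv G"
proof -
  let ?K = "matrix_inv G"
  have "transpose ?K = transpose ?K ** (G ** ?K)"
    using pos_def_matrix_inv[OF assms(1)] by simp
  also have "\<dots> = transpose (G ** ?K) ** ?K"
    by (simp add: matrix_mul_assoc sym matrix_transpose_mul)
  also have "\<dots> = ?K"
    using pos_def_matrix_inv[OF assms(1)] by simp
  finally show ?thesis .
qed

lemma subspace_Dist: "subspace (Dist \<Phi> m q)"
  unfolding subspace_def Dist_def by (auto simp: inner_add_right)

lemma subspace_Dann: "subspace (Dann D q)"
  unfolding subspace_def Dann_def by (auto simp: inner_add_left)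

lemma subspace_Mfib: "subspace (D q) \<Longrightarrow> subspace (Mfib g D q)"
  unfolding Mfib_def by (rule linear_subspace_image[OF matrix_vector_mul_linear])

lemma span_Phi_subset_Dann: "span ((\<lambda>a. \<Phi> a q) ` {..<m}) \<subseteq> Dann (Dist \<Phi> m) q"
  by (intro span_minimal subspace_Dann) (auto simp: Dann_def Dist_def)

lemma Mfib_Dann_eq_0:
  assumes "pos_def (g q)" and "\<beta> \<in> Mfib g D q" and "\<beta> \<in> Dann D q"
  shows "\<beta> = 0"
proof -
  obtain u where u: "u \<in> D q" "\<beta> = g q *v u"
    using assms(2) unfolding Mfib_def by auto
  with assms(3) have "u \<bullet> (g q *v u) = 0"
    unfolding Dann_def by (simp add: inner_commute)
  with assms(1) have "u = 0"
    unfolding pos_def_def by force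
  with u show ?thesis by simp
qed

lemma Pproj_eqI:
  assumes "pos_def (g q)" and "subspace (D q)"
    and "\<beta> \<in> Mfib g D q" and "\<alpha> - \<beta> \<in> Dann D q"
  shows "Pproj g D q \<alpha> = \<beta>"
  unfolding Pproj_def
proof (rule the_equality)
  show "\<beta> \<in> Mfib g D q \<and> \<alpha> - \<beta> \<in> Dann D q"
    using assms by blast
next
  fix \<beta>' assume \<beta>': "\<beta>' \<in> Mfib g D q \<and> \<alpha> - \<beta>' \<in> Dann D q"
  have "\<beta>' - \<beta> \<in> Mfib g D q"
    using \<beta>' assms(3) subspace_Mfib[where D=D and q=q and g=g, OF assms(2)] by (blast intro: subspace_diff)
  moreover have "\<beta>' - \<beta> = (\<alpha> - \<beta>) - (\<alpha> - \<beta>')" by simp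
  then have "\<beta>' - \<beta> \<in> Dann D q"
    using \<beta>' assms(4) subspace_Dann by (metis subspace_diff)
  ultimately show "\<beta>' = \<beta>"
    using Mfib_Dann_eq_0[where g=g and q=q, OF assms(1)] by fastforce
qed

lemma independent_notin_span_lessThan:
  fixes F :: "nat \<Rightarrow> 'a::real_vector"
  assumes "independent (F ` {..<m})" and "inj_on F {..<m}" and "k < m"
  shows "F k \<notin> span (F ` {..<k})"
proof
  assume "F k \<in> span (F ` {..<k})"
  moreover have "F ` {..<k} \<subseteq> F ` {..<m} - {F k}"
  proof
    fix y assume "y \<in> F ` {..<k}"
    then obtain j where j: "j < k" "y = F j" by auto
    with assms(3) have "j < m" by linarith
    with j assms(3) show "y \<in> F ` {..<m} - {F k}"
      using inj_onD[OF assms(2), of j k] by auto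
  qed
  ultimately have "F k \<in> span (F ` {..<m} - {F k})"
    using span_mono by blast
  then have "dependent (F ` {..<m})"
    unfolding dependent_def using assms(3) by auto
  with assms(1) show False by blast
qed

lemma gs_residual_pos:
  fixes F :: "nat \<Rightarrow> real^'n"
  assumes "pos_def K" and "independent (F ` {..<m})" and "inj_on F {..<m}" and "j < m"
  shows "mat_inner K (gs_residual K F j) (gs_residual K F j) > 0"
  using gs_residual_nonzero[OF independent_notin_span_lessThan[OF assms(2-4)]] assms(1)
  unfolding pos_def_def mat_inner_def by blast

text \<open>The projection onto \<open>M\<^sub>q\<close> along \<open>D\<^sup>o\<^sub>q = span \<Phi>\<close> subtracts the
  \<open>g\<^sup>-\<^sup>1\<close>-orthogonal projection onto \<open>span \<Phi>\<close>: the residual is \<open>g\<^sup>-\<^sup>1\<close>-orthogonal to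
  every \<open>\<Phi>\<^sup>a\<close>, i.e. \<open>g\<^sup>-\<^sup>1\<close> maps it into \<open>D\<^sub>q\<close>.\<close>

lemma gs_proj_Dist_decomp:
  fixes \<Phi> :: "nat \<Rightarrow> real^'n \<Rightarrow> real^'n" and \<alpha> :: "real^'n"
  assumes pos: "pos_def (g q)" and sym: "transpose (g q) = g q"
    and indep: "independent ((\<lambda>a. \<Phi> a q) ` {..<m})" and inj: "inj_on (\<lambda>a. \<Phi> a q) {..<m}"
  defines "P \<equiv> gs_proj (matrix_inv (g q)) (\<lambda>a. \<Phi> a q) m \<alpha>"
  shows "\<alpha> - P \<in> Mfib g (Dist \<Phi> m) q" and "P \<in> Dann (Dist \<Phi> m) q"
proof -
  let ?K = "matrix_inv (g q)"
  have K_sym: "transpose ?K = ?K"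
    by (rule symmetric_matrix_inv[OF pos sym])
  have nondeg: "mat_inner ?K (gs_residual ?K (\<lambda>a. \<Phi> a q) j) (gs_residual ?K (\<lambda>a. \<Phi> a q) j) \<noteq> 0"
    if "j < m" for j
    using gs_residual_pos[OF pos_def_inverse[OF pos] indep inj that] by simp
  have "\<Phi> a q \<bullet> (?K *v (\<alpha> - P)) = 0" if "a < m" for a
    using gs_proj_orthogonal[OF K_sym nondeg that, of \<alpha>] mat_inner_commute[OF K_sym]
    unfolding P_def mat_inner_def by metis
  then have "?K *v (\<alpha> - P) \<in> Dist \<Phi> m q"
    unfolding Dist_def by blast
  moreover have "g q *v (?K *v (\<alpha> - P)) = \<alpha> - P"
    using pos_def_matrix_inv[OF pos] by (simp add: matrix_vector_mul_assoc)
  ultimately show "\<alpha> - P \<in> Mfib g (Dist \<Phi> m) q"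
    unfolding Mfib_def by (metis image_eqI)
  show "P \<in> Dann (Dist \<Phi> m) q"
    using gs_proj_in_span span_Phi_subset_Dann unfolding P_def by blast
qed

section \<open>Linear algebra of the contact structure\<close>

lemma cflat_add: "cflat x (u + v) w = cflat x u w + cflat x v w"
  by (simp add: cflat_def deta_def eta_def algebra_simps)

lemma cflat_diff: "cflat x (u - v) w = cflat x u w - cflat x v w"
  by (simp add: cflat_def deta_def eta_def algebra_simps)

lemma cflat_momentum: "cflat x (0, \<delta>, 0) w = - (\<delta> \<bullet> fst w)"
  by (simp add: cflat_def deta_def eta_def)

lemma cflat_eq_momentum_form:
  assumes "\<And>w. cflat x d w = \<beta> \<bullet> fst w"
  shows "d = (0, -\<beta>, 0)"
proof -
  obtain dq dp dz where d: "d = (dq, dp, dz)" by (cases d)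
  have "cflat x d (0, dq, 0) = 0"
    using assms[of "(0, dq, 0)"] by simp
  then have dq: "dq = 0" by (simp add: cflat_def deta_def eta_def d)
  have "cflat x d (0, 0, 1) = 0"
    using assms[of "(0, 0, 1)"] by simp
  then have dz: "dz = 0" by (simp add: cflat_def deta_def eta_def d dq)
  have "cflat x d (dp + \<beta>, 0, 0) = \<beta> \<bullet> (dp + \<beta>)"
    using assms[of "(dp + \<beta>, 0, 0)"] by simp
  then have "- (dp \<bullet> (dp + \<beta>)) = \<beta> \<bullet> (dp + \<beta>)"
    by (simp add: cflat_def deta_def eta_def d dq dz inner_commute)
  then have "(dp + \<beta>) \<bullet> (dp + \<beta>) = 0"
    by (simp only: inner_add_left[of dp \<beta>])
  then have "dp = -\<beta>" by (simp add: add_eq_0_iff)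
  with d dq dz show ?thesis by simp
qed

lemma cflat_surj:
  fixes l :: "'n::finite pt \<Rightarrow> real"
  assumes "linear l"
  shows "\<exists>v. cflat x v = l"
proof -
  obtain rq rp rz where r: "adjoint l 1 = (rq, rp, rz)" by (cases "adjoint l 1")
  have l: "l w = w \<bullet> (rq, rp, rz)" for w
    using adjoint_works[OF assms, of w 1] r by simp
  obtain q p z where x: "x = (q, p, z)" by (cases x)
  \<comment> \<open>match the coefficients of \<open>dp\<close>, \<open>dz\<close> and \<open>dq\<close> in turn\<close>
  have "cflat x (rp, -rq - rz *\<^sub>R p, rz + p \<bullet> rp) w = l w" for w
    by (cases w) (simp add: l x cflat_def deta_def eta_def inner_commute algebra_simps)
  then show ?thesis by blast
qed

lemma cflat_XH:
  fixes F :: "'n::finite pt \<Rightarrow> real"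
  assumes "F differentiable (at x)"
  shows "cflat x (XH F x) =
    (\<lambda>w. frechet_derivative F (at x) w - (frechet_derivative F (at x) reeb + F x) * eta x w)"
proof -
  let ?dF = "frechet_derivative F (at x)"
  let ?l = "\<lambda>w. ?dF w - (?dF reeb + F x) * eta x w"
  interpret dF: linear ?dF
    using assms frechet_derivative_works has_derivative_linear by blast
  have "linear ?l"
    by (rule linearI) (auto simp: dF.add dF.scale eta_def algebra_simps)
  then obtain v where v: "cflat x v = ?l" using cflat_surj by blast
  have "v' = v" if "cflat x v' = ?l" for v'
  proof -
    have "cflat x (v' - v) w = 0 \<bullet> fst w" for w
      using that v by (simp add: cflat_diff)
    then have "v' - v = (0, -0, 0)" by (rule cflat_eq_momentum_form)
    then show "v' = v" by (simp add: zero_prod_def[symmetric])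
  qed
  with v have "\<exists>!v. cflat x v = ?l" by blast
  then show ?thesis unfolding XH_def by (rule theI')
qed

definition constraint_force :: "('n::finite pt \<Rightarrow> real) \<Rightarrow> 'n pt \<Rightarrow> 'n pt \<Rightarrow> 'n pt \<Rightarrow> real" where
  "constraint_force F x v = (\<lambda>w. cflat x v w - frechet_derivative F (at x) w
                              + (F x + frechet_derivative F (at x) reeb) * eta x w)"

lemma constraint_force_diff:
  "constraint_force F x v' w - constraint_force F x v w = cflat x (v' - v) w"
  by (simp add: constraint_force_def cflat_diff)

lemma constraint_force_XH_add_momentum:
  assumes "F differentiable (at x)"
  shows "constraint_force F x (XH F x + (0, \<delta>, 0)) = (\<lambda>w. - \<delta> \<bullet> fst w)"
  using cflat_XH[OF assms] by (simp add: constraint_force_def cflat_add cflat_momentum fun_eq_iff)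

section \<open>The tangent map of \<open>\<gamma>\<close> along \<open>M \<times> \<real>\<close>\<close>

locale metric_constraint =
  fixes U :: "(real^'n) set"
    and g :: "real^'n \<Rightarrow> real^'n^'n"
    and \<Phi> :: "nat \<Rightarrow> real^'n \<Rightarrow> real^'n"
    and m :: nat
  assumes open_U: "open U"
    and g_differentiable: "\<And>q. q \<in> U \<Longrightarrow> g differentiable (at q)"
    and g_symmetric: "\<And>q. q \<in> U \<Longrightarrow> transpose (g q) = g q"
    and g_pos_def: "\<And>q. q \<in> U \<Longrightarrow> pos_def (g q)"
    and Phi_differentiable: "\<And>a q. a < m \<Longrightarrow> q \<in> U \<Longrightarrow> \<Phi> a differentiable (at q)"
    and Phi_independent: "\<And>q. q \<in> U \<Longrightarrow> independent ((\<lambda>a. \<Phi> a q) ` {..<m})"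
    and Phi_inj: "\<And>q. q \<in> U \<Longrightarrow> inj_on (\<lambda>a. \<Phi> a q) {..<m}"
begin

abbreviation D :: "real^'n \<Rightarrow> (real^'n) set" where
  "D \<equiv> Dist \<Phi> m"

lemma open_fst_in_U: "open {y :: 'n pt. fst y \<in> U}"
  using open_vimage_fst[OF open_U] by (simp add: vimage_def)

lemma Pproj_eq_gs_proj:
  assumes "q \<in> U"
  shows "Pproj g D q \<alpha> = \<alpha> - gs_proj (matrix_inv (g q)) (\<lambda>a. \<Phi> a q) m \<alpha>"
  using gs_proj_Dist_decomp[of g q \<Phi> m \<alpha>] assms g_pos_def g_symmetric Phi_independent Phi_inj
  by (intro Pproj_eqI) (auto simp: subspace_Dist)

lemma Pproj_mem:
  assumes "q \<in> U"
  shows "Pproj g D q \<alpha> \<in> Mfib g D q" and "\<alpha> - Pproj g D q \<alpha> \<in> Dann D q"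
  using gs_proj_Dist_decomp[of g q \<Phi> m \<alpha>] assms g_pos_def g_symmetric Phi_independent Phi_inj
  by (auto simp: Pproj_eq_gs_proj)

lemma Pproj_eq_0_iff:
  assumes "q \<in> U"
  shows "Pproj g D q \<delta> = 0 \<longleftrightarrow> \<delta> \<in> Dann D q"
  using Pproj_mem[OF assms, of \<delta>] Pproj_eqI[of g q D 0 \<delta>] g_pos_def[OF assms]
    subspace_0[OF subspace_Mfib[where D=D and q=q and g=g, OF subspace_Dist]]
  by (auto simp: subspace_Dist)

lemma Pproj_affine:
  assumes q: "q \<in> U" and p: "p \<in> Mfib g D q"
  shows "Pproj g D q (p + t *\<^sub>R w) = p + t *\<^sub>R Pproj g D q w"
proof (rule Pproj_eqI[where g=g and q=q and D=D, OF g_pos_def[OF q] subspace_Dist])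
  have M: "subspace (Mfib g D q)"
    by (rule subspace_Mfib[OF subspace_Dist])
  show "p + t *\<^sub>R Pproj g D q w \<in> Mfib g D q"
    using Pproj_mem(1)[OF q] p by (blast intro: subspace_add[OF M] subspace_scale[OF M])
  have "p + t *\<^sub>R w - (p + t *\<^sub>R Pproj g D q w) = t *\<^sub>R (w - Pproj g D q w)"
    by (simp add: algebra_simps)
  then show "p + t *\<^sub>R w - (p + t *\<^sub>R Pproj g D q w) \<in> Dann D q"
    using Pproj_mem(2)[OF q] by (metis subspace_scale subspace_Dann)
qed

lemma gam_in_MR: "fst y \<in> U \<Longrightarrow> gam g D y \<in> MR U g D"
  using Pproj_mem(1) unfolding MR_def gam_def by simp

lemma gam_eq_self: "y \<in> MR U g D \<Longrightarrow> gam g D y = y"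
  using Pproj_eqI[of g "fst y" D "fst (snd y)" "fst (snd y)"] g_pos_def
  by (simp add: MR_def gam_def subspace_Dist subspace_0[OF subspace_Dann])

lemma differentiable_inverse_metric:
  assumes "fst y \<in> U"
  shows "(\<lambda>y :: 'n pt. matrix_inv (g (fst y))) differentiable (at y)"
  using differentiable_matrix_inv[OF differentiable_compose[OF g_differentiable[OF assms]
      bounded_linear_imp_differentiable[OF bounded_linear_fst]]]
    pos_def_matrix_inv(1)[OF g_pos_def[OF assms]]
  by (simp add: o_def)

lemma gam_differentiable:
  assumes y: "fst y \<in> U"
  shows "gam g D differentiable (at y)"
proof -
  let ?K = "\<lambda>y :: 'n pt. matrix_inv (g (fst y))"
  let ?F = "\<lambda>a (y :: 'n pt). \<Phi> a (fst y)"
  let ?R = "\<lambda>y :: 'n pt. (fst y, fst (snd y) - gs_proj (?K y) (\<lambda>a. ?F a y) m (fst (snd y)), snd (snd y))"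
  have fst: "fst differentiable (at y)" and p: "(\<lambda>y :: 'n pt. fst (snd y)) differentiable (at y)"
    and z: "(\<lambda>y :: 'n pt. snd (snd y)) differentiable (at y)"
    by (simp_all add: bounded_linear_imp_differentiable bounded_linear_fst
        bounded_linear_compose[OF bounded_linear_fst bounded_linear_snd]
        bounded_linear_compose[OF bounded_linear_snd bounded_linear_snd])
  have "?K differentiable (at y)"
    by (rule differentiable_inverse_metric[OF y])
  moreover have "?F a differentiable (at y)" if "a < m" for a
    using differentiable_compose[OF Phi_differentiable[OF that y] fst] by (simp add: o_def)
  moreover have "mat_inner (?K y) (gs_residual (?K y) (\<lambda>a. ?F a y) j) (gs_residual (?K y) (\<lambda>a. ?F a y) j) \<noteq> 0"
    if "j < m" for j
    using gs_residual_pos[OF pos_def_inverse[OF g_pos_def[OF y]] Phi_independent[OF y] Phi_inj[OF y] that]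
    by simp
  ultimately have "?R differentiable (at y)"
    using differentiable_gs_proj[of ?K y m ?F] fst p z by simp
  then obtain R' where "(?R has_derivative R') (at y)"
    unfolding differentiable_def by blast
  then have "(gam g D has_derivative R') (at y)"
    by (rule has_derivative_transform_within_open[OF _ open_fst_in_U])
       (use y in \<open>auto simp: gam_def Pproj_eq_gs_proj\<close>)
  then show ?thesis
    unfolding differentiable_def by blast
qed

lemma Ham_differentiable:
  assumes y: "fst y \<in> U"
    and V: "(\<lambda>y. V (fst y) (snd y)) differentiable (at (fst y, snd (snd y)))"
  shows "Ham g V differentiable (at y)"
proof -
  have p: "(\<lambda>y :: 'n pt. fst (snd y)) differentiable (at y)"
    and qz: "(\<lambda>y :: 'n pt. (fst y, snd (snd y))) differentiable (at y)"
    by (simp_all add: bounded_linear_imp_differentiable bounded_linear_fst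
        bounded_linear_compose[OF bounded_linear_fst bounded_linear_snd]
        bounded_linear_Pair bounded_linear_compose[OF bounded_linear_snd bounded_linear_snd])
  have "(\<lambda>y :: 'n pt. mat_inner (matrix_inv (g (fst y))) (fst (snd y)) (fst (snd y))) differentiable (at y)"
    by (rule differentiable_mat_inner[OF differentiable_inverse_metric[OF y] p p])
  moreover have "(\<lambda>y :: 'n pt. V (fst y) (snd (snd y))) differentiable (at y)"
    using differentiable_compose[OF V qz] by (simp add: o_def)
  ultimately show ?thesis
    unfolding Ham_def mat_inner_def[symmetric] by simp
qed

context
  fixes x :: "'n pt"
  assumes x_in: "x \<in> MR U g D"
begin

abbreviation dgam :: "'n pt \<Rightarrow> 'n pt" where
  "dgam \<equiv> frechet_derivative (gam g D) (at x)"

lemma fst_x_in: "fst x \<in> U"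
  using x_in by (simp add: MR_def)

lemma has_derivative_gam: "(gam g D has_derivative dgam) (at x)"
  using gam_differentiable[OF fst_x_in] frechet_derivative_works by blast

lemma linear_dgam: "linear dgam"
  using has_derivative_gam has_derivative_linear by blast

lemma dgam_fst: "fst (dgam u) = fst u"
  by (rule has_derivative_linear_invariant[OF has_derivative_gam bounded_linear_fst])
     (simp add: gam_def)

lemma dgam_snd_snd: "snd (snd (dgam u)) = snd (snd u)"
  by (rule has_derivative_linear_invariant[OF has_derivative_gam
        bounded_linear_compose[OF bounded_linear_snd bounded_linear_snd]])
     (simp add: gam_def)

lemma dgam_momentum: "dgam (0, w, 0) = (0, Pproj g D (fst x) w, 0)"
proof (rule has_derivative_along_line[OF has_derivative_gam])
  obtain q p z where x: "x = (q, p, z)" by (cases x)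
  have "gam g D (x + t *\<^sub>R (0, w, 0)) = x + t *\<^sub>R (0, Pproj g D q w, 0)" for t
    using Pproj_affine[of q p t w] x_in by (simp add: x gam_def MR_def)
  then show "((\<lambda>t. gam g D (x + t *\<^sub>R (0, w, 0))) has_derivative
      (\<lambda>t. t *\<^sub>R (0, Pproj g D (fst x) w, 0))) (at 0)"
    by (simp add: x) (auto intro!: derivative_eq_intros)
qed

lemma dgam_idempotent: "dgam (dgam u) = dgam u"
proof -
  have "((\<lambda>y. gam g D (gam g D y)) has_derivative (\<lambda>u. dgam (dgam u))) (at x)"
    using has_derivative_compose[OF has_derivative_gam, of "gam g D" dgam]
      has_derivative_gam gam_eq_self[OF x_in] by simp
  then have "(gam g D has_derivative (\<lambda>u. dgam (dgam u))) (at x)"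
    by (rule has_derivative_transform_within_open[OF _ open_fst_in_U])
       (use fst_x_in gam_in_MR gam_eq_self in auto)
  then have "(\<lambda>u. dgam (dgam u)) = dgam"
    using has_derivative_gam has_derivative_unique by blast
  then show ?thesis by metis
qed

lemma dgam_eq_add_momentum: "\<exists>\<delta>\<in>Dann D (fst x). dgam u = u + (0, \<delta>, 0)"
proof
  define \<delta> where "\<delta> = fst (snd (dgam u)) - fst (snd u)"
  show dec: "dgam u = u + (0, \<delta>, 0)"
    using dgam_fst[of u] dgam_snd_snd[of u]
    by (cases "dgam u", cases u) (simp add: \<delta>_def)
  have "dgam (dgam u) = dgam u + (0, Pproj g D (fst x) \<delta>, 0)"
    by (subst (1) dec) (simp add: linear_add[OF linear_dgam] dgam_momentum)
  then have "Pproj g D (fst x) \<delta> = 0"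
    using dgam_idempotent[of u] by (simp add: prod_eq_iff)
  then show "\<delta> \<in> Dann D (fst x)"
    using Pproj_eq_0_iff[OF fst_x_in] by blast
qed

lemma dgam_Dann: "\<delta> \<in> Dann D (fst x) \<Longrightarrow> dgam (0, \<delta>, 0) = 0"
  using Pproj_eq_0_iff[OF fst_x_in] by (simp add: dgam_momentum zero_prod_def)

lemma dgam_tangent:
  assumes "v \<in> tspace (MR U g D) x"
  shows "dgam v = v"
proof -
  obtain c e where "e > 0" and "c 0 = x" and c_MR: "\<And>t. \<bar>t\<bar> < e \<Longrightarrow> c t \<in> MR U g D"
    and c_vd: "(c has_vector_derivative v) (at 0)"
    using assms unfolding tspace_def by blast
  from c_vd have c': "(c has_derivative (\<lambda>t. t *\<^sub>R v)) (at 0)"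
    unfolding has_vector_derivative_def .
  have "((\<lambda>t. gam g D (c t)) has_derivative (\<lambda>t. dgam (t *\<^sub>R v))) (at 0)"
    using has_derivative_compose[OF c', of "gam g D" dgam] has_derivative_gam \<open>c 0 = x\<close> by simp
  then have "(c has_derivative (\<lambda>t. dgam (t *\<^sub>R v))) (at 0)"
    by (rule has_derivative_transform_within_open[OF _ open_ball[of 0 e]])
       (use \<open>e > 0\<close> c_MR gam_eq_self in auto)
  with c' have "(\<lambda>t. dgam (t *\<^sub>R v)) = (\<lambda>t. t *\<^sub>R v)"
    using has_derivative_unique by blast
  from fun_cong[OF this, of 1] show ?thesis by simp
qed

lemma dgam_in_tspace: "dgam v \<in> tspace (MR U g D) x"
proof -
  have "open ((\<lambda>t::real. fst x + t *\<^sub>R fst v) -` U)"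
    by (intro open_vimage open_U continuous_intros)
  moreover have "0 \<in> (\<lambda>t::real. fst x + t *\<^sub>R fst v) -` U"
    using fst_x_in by simp
  ultimately obtain e where "e > 0" and e: "ball 0 e \<subseteq> (\<lambda>t::real. fst x + t *\<^sub>R fst v) -` U"
    by (rule openE)
  have "((\<lambda>t::real. x + t *\<^sub>R v) has_derivative (\<lambda>t. t *\<^sub>R v)) (at 0)"
    by (auto intro!: derivative_eq_intros)
  from has_derivative_compose[OF this, of "gam g D" dgam]
  have "((\<lambda>t. gam g D (x + t *\<^sub>R v)) has_vector_derivative dgam v) (at 0)"
    using has_derivative_gam
    by (simp add: has_vector_derivative_def linear_scale[OF linear_dgam])
  moreover have "gam g D (x + t *\<^sub>R v) \<in> MR U g D" if "\<bar>t\<bar> < e" for t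
    using e that by (intro gam_in_MR) auto
  moreover have "gam g D (x + 0 *\<^sub>R v) = x"
    using gam_eq_self[OF x_in] by simp
  ultimately show ?thesis
    unfolding tspace_def using \<open>e > 0\<close>
    by (intro CollectI exI[of _ "\<lambda>t. gam g D (x + t *\<^sub>R v)"] exI[of _ e]) simp
qed

text \<open>Two solutions of the constraint condition differ by a momentum in \<open>D\<^sup>o\<close>,
  which \<^term>\<open>dgam\<close> annihilates although it fixes tangent vectors.\<close>

lemma XHM_eqI:
  assumes v: "v \<in> tspace (MR U g D) x" and \<alpha>: "\<alpha> \<in> Dann D (fst x)"
    and force: "constraint_force F x v = (\<lambda>w. \<alpha> \<bullet> fst w)"
  shows "XHM U g D F x = v"
  unfolding XHM_def constraint_force_def[symmetric]
proof (rule the_equality)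
  show "v \<in> tspace (MR U g D) x \<and> (\<exists>\<alpha>\<in>Dann D (fst x). constraint_force F x v = (\<lambda>w. \<alpha> \<bullet> fst w))"
    using v \<alpha> force by blast
next
  fix v' assume "v' \<in> tspace (MR U g D) x
    \<and> (\<exists>\<alpha>\<in>Dann D (fst x). constraint_force F x v' = (\<lambda>w. \<alpha> \<bullet> fst w))"
  then obtain \<alpha>' where v': "v' \<in> tspace (MR U g D) x" and \<alpha>': "\<alpha>' \<in> Dann D (fst x)"
    and force': "constraint_force F x v' = (\<lambda>w. \<alpha>' \<bullet> fst w)"
    by blast
  have "cflat x (v' - v) w = (\<alpha>' - \<alpha>) \<bullet> fst w" for w
    using constraint_force_diff[of F x v' w v] force force' by (simp add: inner_diff_left)
  then have "v' - v = (0, -(\<alpha>' - \<alpha>), 0)"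
    by (rule cflat_eq_momentum_form)
  moreover have "-(\<alpha>' - \<alpha>) \<in> Dann D (fst x)"
    using \<alpha> \<alpha>' subspace_Dann by (metis subspace_diff subspace_neg)
  ultimately have "dgam (v' - v) = 0"
    by (simp add: dgam_Dann)
  moreover have "dgam (v' - v) = v' - v"
    using dgam_tangent[OF v] dgam_tangent[OF v'] by (simp add: linear_diff[OF linear_dgam])
  ultimately show "v' = v" by simp
qed

lemma XHM_eq_dgam_XH:
  assumes "F differentiable (at x)"
  shows "XHM U g D F x = dgam (XH F x)"
proof -
  obtain \<delta> where \<delta>: "\<delta> \<in> Dann D (fst x)" and dec: "dgam (XH F x) = XH F x + (0, \<delta>, 0)"
    using dgam_eq_add_momentum by blast
  show ?thesis
  proof (rule XHM_eqI[OF dgam_in_tspace])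
    show "- \<delta> \<in> Dann D (fst x)"
      using \<delta> subspace_Dann by (metis subspace_neg)
    show "constraint_force F x (dgam (XH F x)) = (\<lambda>w. - \<delta> \<bullet> fst w)"
      using constraint_force_XH_add_momentum[OF assms] by (simp add: dec)
  qed
qed

lemma XH_comp_gam:
  assumes F: "F differentiable (at x)"
    and dF_Dann: "\<And>\<delta>. \<delta> \<in> Dann D (fst x) \<Longrightarrow> frechet_derivative F (at x) (0, \<delta>, 0) = 0"
  shows "XH (F \<circ> gam g D) x = XH F x"
proof -
  let ?dF = "frechet_derivative F (at x)"
  have dF: "(F has_derivative ?dF) (at x)"
    using F frechet_derivative_works by blast
  have "((F \<circ> gam g D) has_derivative (\<lambda>w. ?dF (dgam w))) (at x)"
    using has_derivative_compose[OF has_derivative_gam, of F ?dF] dF gam_eq_self[OF x_in]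
    by (simp add: o_def)
  then have "frechet_derivative (F \<circ> gam g D) (at x) = (\<lambda>w. ?dF (dgam w))"
    by (rule frechet_derivative_at[symmetric])
  also have "\<dots> = ?dF"
  proof
    fix w
    obtain \<delta> where "\<delta> \<in> Dann D (fst x)" and "dgam w = w + (0, \<delta>, 0)"
      using dgam_eq_add_momentum by blast
    then show "?dF (dgam w) = ?dF w"
      using dF_Dann linear_add[OF has_derivative_linear[OF dF]] by simp
  qed
  finally have "frechet_derivative (F \<circ> gam g D) (at x) = ?dF" .
  then show ?thesis
    unfolding XH_def by (simp add: gam_eq_self[OF x_in])
qed

text \<open>At \<open>p \<in> M\<^sub>q\<close> the kinetic energy is \<open>g\<^sup>-\<^sup>1\<close>-orthogonal to \<open>D\<^sup>o\<^sub>q\<close>, so along a momentum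
  direction \<open>\<delta> \<in> D\<^sup>o\<^sub>q\<close> the Hamiltonian changes only to second order.\<close>

lemma Ham_derivative_Dann:
  assumes H: "Ham g V differentiable (at x)"
    and \<delta>: "\<delta> \<in> Dann D (fst x)"
  shows "frechet_derivative (Ham g V) (at x) (0, \<delta>, 0) = 0"
proof -
  obtain q p z where x: "x = (q, p, z)" by (cases x)
  let ?K = "matrix_inv (g q)"
  from x_in obtain u where "u \<in> D q" and p: "p = g q *v u"
    by (auto simp: x MR_def Mfib_def)
  have q: "q \<in> U" and "?K *v p = u"
    using x_in pos_def_matrix_inv(3)[OF g_pos_def] by (auto simp: x MR_def p matrix_vector_mul_assoc)
  with \<delta> \<open>u \<in> D q\<close> have \<delta>_p: "\<delta> \<bullet> (?K *v p) = 0"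
    by (simp add: x Dann_def)
  then have p_\<delta>: "p \<bullet> (?K *v \<delta>) = 0"
    using mat_inner_commute[OF symmetric_matrix_inv[OF g_pos_def[OF q] g_symmetric[OF q]], of p \<delta>]
    by (simp add: mat_inner_def)
  have "Ham g V (x + t *\<^sub>R (0, \<delta>, 0)) = Ham g V x + t\<^sup>2 * (\<delta> \<bullet> (?K *v \<delta>) / 2)" for t
    using \<delta>_p p_\<delta> by (simp add: x Ham_def power2_eq_square algebra_simps)
  then have "((\<lambda>t. Ham g V (x + t *\<^sub>R (0, \<delta>, 0))) has_derivative (\<lambda>t. t *\<^sub>R 0)) (at 0)"
    by simp (auto intro!: derivative_eq_intros)
  with H show ?thesis
    using has_derivative_along_line frechet_derivative_works by blast
qed

end

end

theorem mainTheorem2: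
  fixes U :: "(real^'n) set"
    and g :: "real^'n \<Rightarrow> real^'n^'n"
    and V :: "real^'n \<Rightarrow> real \<Rightarrow> real"
    and \<Phi> :: "nat \<Rightarrow> real^'n \<Rightarrow> real^'n"
    and m :: nat
    and x :: "'n pt"
  assumes U_open: "open U"
    and g_smooth: "smooth_on U g"
    and g_sym: "\<forall>q\<in>U. transpose (g q) = g q"
    and g_pos: "\<forall>q\<in>U. \<forall>v. v \<noteq> 0 \<longrightarrow> v \<bullet> (g q *v v) > 0"
    and V_smooth: "smooth_on (U \<times> UNIV) (\<lambda>y. V (fst y) (snd y))"
    and Phi_smooth: "\<forall>a<m. smooth_on U (\<Phi> a)"
    and Phi_indep: "\<forall>q\<in>U. independent ((\<lambda>a. \<Phi> a q) ` {..<m}) \<and> inj_on (\<lambda>a. \<Phi> a q) {..<m}"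
    and x_in: "x \<in> MR U g (Dist \<Phi> m)"
  shows "frechet_derivative (gam g (Dist \<Phi> m)) (at x) (XH (Ham g V) x)
           = XHM U g (Dist \<Phi> m) (Ham g V) x
       \<and> XHM U g (Dist \<Phi> m) (Ham g V) x
           = frechet_derivative (gam g (Dist \<Phi> m)) (at x)
               (XH (Ham g V \<circ> gam g (Dist \<Phi> m)) x)"
proof -
  interpret metric_constraint U g \<Phi> m
    using U_open g_sym g_pos Phi_indep
    by unfold_locales
       (auto simp: pos_def_def intro: smooth_on_imp_differentiable g_smooth Phi_smooth[rule_format])
  have "fst x \<in> U"
    using x_in by (simp add: MR_def)
  then have H: "Ham g V differentiable (at x)"
    using V_smooth by (intro Ham_differentiable smooth_on_imp_differentiable) auto
  show ?thesis
    using XHM_eq_dgam_XH[OF x_in H] XH_comp_gam[OF x_in H Ham_derivative_Dann[OF x_in H]]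
    by simp
qed

end
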